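(* Let $\varepsilon>0$ and let $(G,\mathcal P,\mathcal I,k)$ be an instance of $\mathrm{BAL}(\mu,\nu)$ with $k\ge2\nu/\varepsilon$. Let $(G',\mathcal P,\mathcal I',k)$ be the transformed instance obtained by adding a new isolated node $v$ to $G$ and adding $v$ to $I_i$ for every $i\in[\nu]$. Let $\Phi'$ be the objective of the transformed instance and $\mathcal S'$ a solution of it with $\Phi'(\mathcal S')\ge\alpha\,\Phi'(\mathcal S'^* )$, where $\mathcal S'^*$ is an optimal solution for maximizing $\Phi'$. Then $\mathcal S=\mathcal S'\setminus\{v\}$ (removing $v$ from every set) satisfies $\Phi(\mathcal S)\ge(\alpha-\varepsilon)\Phi(\mathcal S^* )$, where $\mathcal S^*$ is an optimal solution for maximizing $\Phi$ in the original instance.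
   Context: Triggering model: for a directed graph $G=(V,E)$ and $p:E\to[0,1]$, an outcome $X=(T_v)_{v\in V}$ is obtained by having each node $v$ independently choose a subset $T_v$ of its in-neighbours $N_v$, with $T_v=S$ with probability $\prod_{u\in S}p_{uv}\prod_{u\in N_v\setminus S}(1-p_{uv})$; $\rho_X(A)$ is the set of nodes reachable from $A\subseteq V$ via arcs $\{(u,v):u\in T_v\}$. $\mathrm{BAL}(\mu,\nu)$ for integer constants $\mu\ge\nu\ge2$: instance = directed graph $G=(V,E)$, probability functions $\mathcal P=(p_1,\dots,p_\mu)$ on $E$, seed sets $\mathcal I=(I_1,\dots,I_\mu)$, budget $k\ge2$; standing assumptions $\nu\le k\le\nu|V|$, $|V|\ge\mu$. A solution is $\mathcal S=(S_1,\dots,S_\mu)$, $S_i\subseteq V$, $\sum_i|S_i|\le k$. An outcome profile $(X_1,\dots,X_\mu)$ consists of outcomes $X_i$ w.r.t. $p_i$ (independent in the heterogeneous setting; identical in the correlated setting). $\Phi(\mathcal S)$ is the expected number of nodes lying in none or in at least $\nu$ of the sets $\rho_{X_i}(I_i\cup S_i)$. *)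

theory Defs
  imports Complex_Main "HOL-Library.FuncSet"
begin

text \<open>Directed graph: finite node set V, arc set E \<subseteq> V \<times> V. Nodes have type 'a.
  Indices of the \<mu> campaigns are 0..\<mu>-1; "[\<nu>]" is {0..\<nu>-1}.\<close>

definition in_nbrs :: "('a \<times> 'a) set \<Rightarrow> 'a \<Rightarrow> 'a set" where
  "in_nbrs E w = {u. (u, w) \<in> E}"

text \<open>An outcome X assigns to each node w the chosen subset T_w of its in-neighbours
  (and the empty set to non-nodes).\<close>
definition outcomes :: "'a set \<Rightarrow> ('a \<times> 'a) set \<Rightarrow> ('a \<Rightarrow> 'a set) set" where
  "outcomes V E = {X. \<forall>w. X w \<subseteq> (if w \<in> V then in_nbrs E w else {})}"

definition outcome_prob :: "'a set \<Rightarrow> ('a \<times> 'a) set \<Rightarrow> ('a \<times> 'a \<Rightarrow> real) \<Rightarrow> ('a \<Rightarrow> 'a set) \<Rightarrow> real" where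
  "outcome_prob V E p X =
     (\<Prod>w\<in>V. \<Prod>u\<in>in_nbrs E w. if u \<in> X w then p (u, w) else 1 - p (u, w))"

definition reach :: "('a \<Rightarrow> 'a set) \<Rightarrow> 'a set \<Rightarrow> 'a set" where
  "reach X A = {y. \<exists>x\<in>A. (x, y) \<in> {(u, w). u \<in> X w}\<^sup>*}"

definition balanced_count ::
  "nat \<Rightarrow> nat \<Rightarrow> 'a set \<Rightarrow> (nat \<Rightarrow> 'a set) \<Rightarrow> (nat \<Rightarrow> 'a set) \<Rightarrow> (nat \<Rightarrow> 'a \<Rightarrow> 'a set) \<Rightarrow> real" where
  "balanced_count \<mu> \<nu> V I S Xs =
     real (card {w\<in>V. let c = card {i\<in>{..<\<mu>}. w \<in> reach (Xs i) (I i \<union> S i)} in c = 0 \<or> \<nu> \<le> c})"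

text \<open>If corr is False (heterogeneous setting) the outcomes X_i w.r.t. p_i are
  independent; if corr is True (correlated setting) all outcomes are one and the same outcome X
  (drawn w.r.t. p_0; in this setting the p_i coincide).\<close>
definition Phi ::
  "bool \<Rightarrow> nat \<Rightarrow> nat \<Rightarrow> 'a set \<Rightarrow> ('a \<times> 'a) set \<Rightarrow> (nat \<Rightarrow> 'a \<times> 'a \<Rightarrow> real)
     \<Rightarrow> (nat \<Rightarrow> 'a set) \<Rightarrow> (nat \<Rightarrow> 'a set) \<Rightarrow> real" where
  "Phi corr \<mu> \<nu> V E P I S =
     (if corr then
        (\<Sum>X\<in>outcomes V E. outcome_prob V E (P 0) X * balanced_count \<mu> \<nu> V I S (\<lambda>_. X))
      else
        (\<Sum>Xs\<in>(PiE {..<\<mu>} (\<lambda>_. outcomes V E)).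
            (\<Prod>i<\<mu>. outcome_prob V E (P i) (Xs i)) * balanced_count \<mu> \<nu> V I S Xs))"

definition BAL_instance ::
  "bool \<Rightarrow> nat \<Rightarrow> nat \<Rightarrow> 'a set \<Rightarrow> ('a \<times> 'a) set \<Rightarrow> (nat \<Rightarrow> 'a \<times> 'a \<Rightarrow> real)
     \<Rightarrow> (nat \<Rightarrow> 'a set) \<Rightarrow> nat \<Rightarrow> bool" where
  "BAL_instance corr \<mu> \<nu> V E P I k \<longleftrightarrow>
     2 \<le> \<nu> \<and> \<nu> \<le> \<mu> \<and> finite V \<and> E \<subseteq> V \<times> V \<and>
     (\<forall>i<\<mu>. \<forall>e\<in>E. 0 \<le> P i e \<and> P i e \<le> 1) \<and>
     (\<forall>i<\<mu>. I i \<subseteq> V) \<and>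
     (corr \<longrightarrow> (\<forall>i<\<mu>. \<forall>e\<in>E. P i e = P 0 e)) \<and>
     2 \<le> k \<and> \<nu> \<le> k \<and> k \<le> \<nu> * card V \<and> \<mu> \<le> card V"

definition feasible :: "nat \<Rightarrow> 'a set \<Rightarrow> nat \<Rightarrow> (nat \<Rightarrow> 'a set) \<Rightarrow> bool" where
  "feasible \<mu> V k S \<longleftrightarrow> (\<forall>i<\<mu>. S i \<subseteq> V) \<and> (\<Sum>i<\<mu>. card (S i)) \<le> k"

definition optimal ::
  "bool \<Rightarrow> nat \<Rightarrow> nat \<Rightarrow> 'a set \<Rightarrow> ('a \<times> 'a) set \<Rightarrow> (nat \<Rightarrow> 'a \<times> 'a \<Rightarrow> real)
     \<Rightarrow> (nat \<Rightarrow> 'a set) \<Rightarrow> nat \<Rightarrow> (nat \<Rightarrow> 'a set) \<Rightarrow> bool" where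
  "optimal corr \<mu> \<nu> V E P I k S \<longleftrightarrow> feasible \<mu> V k S \<and>
     (\<forall>T. feasible \<mu> V k T \<longrightarrow> Phi corr \<mu> \<nu> V E P I T \<le> Phi corr \<mu> \<nu> V E P I S)"

end

theory Submission
  imports Defs
begin

text \<open>The new node \<open>v\<close> is isolated, so it changes neither the outcome space nor the outcome
  probabilities, and in every outcome it lies in exactly the \<open>\<nu>\<close> seeded sets. Hence the
  transformed objective is \<open>\<Phi>'(\<S>') = \<Phi>(\<S>' - v) + Z\<close>, where \<open>Z\<close> is the total mass of the outcome
  distribution. Seeding one set of \<open>\<lfloor>k/\<nu>\<rfloor>\<close> nodes in the first \<open>\<nu>\<close> campaigns makes all of them
  count in every outcome, so \<open>\<Phi>(\<S>*) \<ge> \<lfloor>k/\<nu>\<rfloor> Z \<ge> Z/\<epsilon>\<close>; the additive loss \<open>Z\<close> of the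
  reduction is therefore at most \<open>\<epsilon> \<Phi>(\<S>*)\<close>.\<close>

lemma reach_remove_source_without_out_arcs:
  assumes no_out: "\<And>w. v \<notin> X w" and "w \<noteq> v"
  shows "w \<in> reach X A \<longleftrightarrow> w \<in> reach X (A - {v})"
proof -
  have "y = v" if "(v, y) \<in> {(u, w). u \<in> X w}\<^sup>*" for y
    using that by (rule converse_rtranclE) (use no_out in auto)
  then show ?thesis
    using \<open>w \<noteq> v\<close> unfolding reach_def by blast
qed

lemma reach_node_without_in_arcs:
  assumes "X v = {}"
  shows "v \<in> reach X A \<longleftrightarrow> v \<in> A"
proof -
  have "x = v" if "(x, v) \<in> {(u, w). u \<in> X w}\<^sup>*" for x
    using that by (rule rtranclE) (use assms in auto)
  then show ?thesis
    unfolding reach_def by blast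
qed

lemma in_nbrs_outside:
  assumes "E \<subseteq> V \<times> V" and "v \<notin> V"
  shows "in_nbrs E v = {}"
  using assms unfolding in_nbrs_def by blast

lemma outcomes_outside_node:
  assumes "X \<in> outcomes V E" and "E \<subseteq> V \<times> V" and "v \<notin> V"
  shows "X v = {}" and "v \<notin> X w"
  using assms unfolding outcomes_def in_nbrs_def by (auto split: if_splits)

lemma outcomes_insert_isolated:
  assumes "E \<subseteq> V \<times> V" and "v \<notin> V"
  shows "outcomes (insert v V) E = outcomes V E"
  using in_nbrs_outside[OF assms] unfolding outcomes_def by auto

lemma outcome_prob_insert_isolated:
  assumes "finite V" and "E \<subseteq> V \<times> V" and "v \<notin> V"
  shows "outcome_prob (insert v V) E p X = outcome_prob V E p X"
  using assms in_nbrs_outside[OF assms(2,3)] unfolding outcome_prob_def by simp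

lemma outcome_prob_nonneg:
  assumes "\<forall>e\<in>E. 0 \<le> p e \<and> p e \<le> 1"
  shows "0 \<le> outcome_prob V E p X"
  unfolding outcome_prob_def
  by (intro prod_nonneg) (use assms in \<open>auto simp: in_nbrs_def\<close>)

text \<open>The total mass \<open>outcome_expectation corr \<mu> V E P (\<lambda>_. 1)\<close> is in fact 1, but only its
  nonnegativity is needed.\<close>

definition outcome_expectation ::
  "bool \<Rightarrow> nat \<Rightarrow> 'a set \<Rightarrow> ('a \<times> 'a) set \<Rightarrow> (nat \<Rightarrow> 'a \<times> 'a \<Rightarrow> real)
     \<Rightarrow> ((nat \<Rightarrow> 'a \<Rightarrow> 'a set) \<Rightarrow> real) \<Rightarrow> real" where
  "outcome_expectation corr \<mu> V E P f =
     (if corr then (\<Sum>X\<in>outcomes V E. outcome_prob V E (P 0) X * f (\<lambda>_. X))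
      else (\<Sum>Xs\<in>PiE {..<\<mu>} (\<lambda>_. outcomes V E). (\<Prod>i<\<mu>. outcome_prob V E (P i) (Xs i)) * f Xs))"

lemma Phi_eq_outcome_expectation:
  "Phi corr \<mu> \<nu> V E P I S = outcome_expectation corr \<mu> V E P (balanced_count \<mu> \<nu> V I S)"
  unfolding Phi_def outcome_expectation_def ..

lemma outcome_expectation_cong:
  assumes "\<And>Xs. (\<And>i. i < \<mu> \<Longrightarrow> Xs i \<in> outcomes V E) \<Longrightarrow> f Xs = g Xs"
  shows "outcome_expectation corr \<mu> V E P f = outcome_expectation corr \<mu> V E P g"
  unfolding outcome_expectation_def using assms by (auto intro!: sum.cong simp: PiE_iff)

lemma outcome_expectation_mono:
  assumes P: "\<forall>i<\<mu>. \<forall>e\<in>E. 0 \<le> P i e \<and> P i e \<le> 1" and "0 < \<mu>"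
    and le: "\<And>Xs. (\<And>i. i < \<mu> \<Longrightarrow> Xs i \<in> outcomes V E) \<Longrightarrow> f Xs \<le> g Xs"
  shows "outcome_expectation corr \<mu> V E P f \<le> outcome_expectation corr \<mu> V E P g"
proof -
  have P0: "\<forall>e\<in>E. 0 \<le> P 0 e \<and> P 0 e \<le> 1"
    using P \<open>0 < \<mu>\<close> by blast
  have "0 \<le> (\<Prod>i<\<mu>. outcome_prob V E (P i) (Xs i))" for Xs
    using P by (intro prod_nonneg) (auto intro: outcome_prob_nonneg)
  then show ?thesis
    unfolding outcome_expectation_def
    using outcome_prob_nonneg[OF P0] le
    by (auto intro!: sum_mono mult_left_mono simp: PiE_iff)
qed

lemma outcome_expectation_add:
  "outcome_expectation corr \<mu> V E P (\<lambda>Xs. f Xs + g Xs)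
     = outcome_expectation corr \<mu> V E P f + outcome_expectation corr \<mu> V E P g"
  unfolding outcome_expectation_def by (simp add: distrib_left sum.distrib)

lemma outcome_expectation_cmult:
  "outcome_expectation corr \<mu> V E P (\<lambda>Xs. c * f Xs) = c * outcome_expectation corr \<mu> V E P f"
  unfolding outcome_expectation_def by (simp add: sum_distrib_left algebra_simps)

lemma outcome_expectation_insert_isolated:
  assumes "finite V" and "E \<subseteq> V \<times> V" and "v \<notin> V"
  shows "outcome_expectation corr \<mu> (insert v V) E P f = outcome_expectation corr \<mu> V E P f"
  unfolding outcome_expectation_def
  by (simp only: outcomes_insert_isolated[OF assms(2,3)] outcome_prob_insert_isolated[OF assms])

lemma outcome_expectation_nonneg:
  assumes "\<forall>i<\<mu>. \<forall>e\<in>E. 0 \<le> P i e \<and> P i e \<le> 1" and "0 < \<mu>"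
    and "\<And>Xs. (\<And>i. i < \<mu> \<Longrightarrow> Xs i \<in> outcomes V E) \<Longrightarrow> 0 \<le> f Xs"
  shows "0 \<le> outcome_expectation corr \<mu> V E P f"
proof -
  have "outcome_expectation corr \<mu> V E P (\<lambda>_. 0) \<le> outcome_expectation corr \<mu> V E P f"
    by (rule outcome_expectation_mono[OF assms(1,2)]) (rule assms(3))
  then show ?thesis
    using outcome_expectation_cmult[of corr \<mu> V E P 0 "\<lambda>_. 1"] by simp
qed

lemma Phi_nonneg:
  assumes "\<forall>i<\<mu>. \<forall>e\<in>E. 0 \<le> P i e \<and> P i e \<le> 1" and "0 < \<mu>"
  shows "0 \<le> Phi corr \<mu> \<nu> V E P I S"
  unfolding Phi_eq_outcome_expectation
  by (rule outcome_expectation_nonneg[OF assms]) (simp add: balanced_count_def)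

lemma Phi_cong:
  assumes "\<And>i. i < \<mu> \<Longrightarrow> S i = T i"
  shows "Phi corr \<mu> \<nu> V E P I S = Phi corr \<mu> \<nu> V E P I T"
proof -
  have "{i\<in>{..<\<mu>}. w \<in> reach (Xs i) (I i \<union> S i)} = {i\<in>{..<\<mu>}. w \<in> reach (Xs i) (I i \<union> T i)}"
    for w Xs
    using assms by auto
  then show ?thesis
    unfolding Phi_def balanced_count_def by simp
qed

lemma balanced_count_insert_isolated:
  assumes "finite V" and "v \<notin> V" and "\<nu> \<le> \<mu>"
    and seeds: "\<And>i. i < \<mu> \<Longrightarrow> I' i - {v} = I i" and v_seed: "\<And>i. i < \<nu> \<Longrightarrow> v \<in> I' i"
    and no_in: "\<And>i. i < \<mu> \<Longrightarrow> Xs i v = {}"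
    and no_out: "\<And>i w. i < \<mu> \<Longrightarrow> v \<notin> Xs i w"
  shows "balanced_count \<mu> \<nu> (insert v V) I' T Xs = balanced_count \<mu> \<nu> V I (\<lambda>i. T i - {v}) Xs + 1"
proof -
  let ?reached' = "\<lambda>w. {i\<in>{..<\<mu>}. w \<in> reach (Xs i) (I' i \<union> T i)}"
  let ?reached = "\<lambda>w. {i\<in>{..<\<mu>}. w \<in> reach (Xs i) (I i \<union> (T i - {v}))}"
  let ?balanced' = "\<lambda>w. let c = card (?reached' w) in c = 0 \<or> \<nu> \<le> c"
  let ?balanced = "\<lambda>w. let c = card (?reached w) in c = 0 \<or> \<nu> \<le> c"
  have "w \<in> reach (Xs i) (I' i \<union> T i) \<longleftrightarrow> w \<in> reach (Xs i) (I i \<union> (T i - {v}))"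
    if "w \<in> V" and "i < \<mu>" for w i
  proof -
    have "\<And>u. v \<notin> Xs i u"
      using no_out \<open>i < \<mu>\<close> by blast
    moreover have "w \<noteq> v"
      using \<open>w \<in> V\<close> \<open>v \<notin> V\<close> by blast
    ultimately have "w \<in> reach (Xs i) (I' i \<union> T i) \<longleftrightarrow> w \<in> reach (Xs i) ((I' i \<union> T i) - {v})"
      by (rule reach_remove_source_without_out_arcs)
    moreover have "(I' i \<union> T i) - {v} = I i \<union> (T i - {v})"
      using seeds[OF \<open>i < \<mu>\<close>] by auto
    ultimately show ?thesis
      by simp
  qed
  then have "?reached' w = ?reached w" if "w \<in> V" for w
    using that by auto
  then have "{w\<in>V. ?balanced' w} = {w\<in>V. ?balanced w}"
    by (simp cong: conj_cong)
  moreover have "?balanced' v"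
  proof -
    have "v \<in> reach (Xs i) (I' i \<union> T i)" if "i < \<nu>" for i
      using reach_node_without_in_arcs[of "Xs i" v] no_in v_seed that \<open>\<nu> \<le> \<mu>\<close> by simp
    then have "{..<\<nu>} \<subseteq> ?reached' v"
      using \<open>\<nu> \<le> \<mu>\<close> by auto
    then show ?thesis
      using card_mono[of "?reached' v" "{..<\<nu>}"] by (simp add: Let_def)
  qed
  ultimately have "{w\<in>insert v V. ?balanced' w} = insert v {w\<in>V. ?balanced w}"
    by blast
  then show ?thesis
    using \<open>finite V\<close> \<open>v \<notin> V\<close> unfolding balanced_count_def by simp
qed

lemma Phi_insert_isolated:
  assumes "finite V" and "E \<subseteq> V \<times> V" and "v \<notin> V" and "\<nu> \<le> \<mu>"
    and "\<And>i. i < \<mu> \<Longrightarrow> I' i - {v} = I i" and "\<And>i. i < \<nu> \<Longrightarrow> v \<in> I' i"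
  shows "Phi corr \<mu> \<nu> (insert v V) E P I' T
       = Phi corr \<mu> \<nu> V E P I (\<lambda>i. T i - {v}) + outcome_expectation corr \<mu> V E P (\<lambda>_. 1)"
proof -
  have "balanced_count \<mu> \<nu> (insert v V) I' T Xs = balanced_count \<mu> \<nu> V I (\<lambda>i. T i - {v}) Xs + 1"
    if Xs: "\<And>i. i < \<mu> \<Longrightarrow> Xs i \<in> outcomes V E" for Xs
    using outcomes_outside_node[OF Xs assms(2,3)]
    by (intro balanced_count_insert_isolated[OF assms(1,3-6)]) blast+
  then have "outcome_expectation corr \<mu> V E P (balanced_count \<mu> \<nu> (insert v V) I' T)
      = outcome_expectation corr \<mu> V E P (\<lambda>Xs. balanced_count \<mu> \<nu> V I (\<lambda>i. T i - {v}) Xs + 1)"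
    by (rule outcome_expectation_cong)
  also have "\<dots> = Phi corr \<mu> \<nu> V E P I (\<lambda>i. T i - {v}) + outcome_expectation corr \<mu> V E P (\<lambda>_. 1)"
    unfolding Phi_eq_outcome_expectation by (rule outcome_expectation_add)
  finally show ?thesis
    unfolding Phi_eq_outcome_expectation outcome_expectation_insert_isolated[OF assms(1-3)] .
qed

lemma balanced_count_ge_common_seeds:
  assumes "finite V" and "W \<subseteq> V" and "\<nu> \<le> \<mu>" and "\<And>i. i < \<nu> \<Longrightarrow> W \<subseteq> S i"
  shows "real (card W) \<le> balanced_count \<mu> \<nu> V I S Xs"
proof -
  let ?reached = "\<lambda>w. {i\<in>{..<\<mu>}. w \<in> reach (Xs i) (I i \<union> S i)}"
  have "{..<\<nu>} \<subseteq> ?reached w" if "w \<in> W" for w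
    using that assms(3,4) unfolding reach_def by auto
  then have "\<nu> \<le> card (?reached w)" if "w \<in> W" for w
    using that card_mono[of "?reached w" "{..<\<nu>}"] by simp
  then have "W \<subseteq> {w\<in>V. let c = card (?reached w) in c = 0 \<or> \<nu> \<le> c}"
    using \<open>W \<subseteq> V\<close> by (auto simp: Let_def)
  then show ?thesis
    using \<open>finite V\<close> unfolding balanced_count_def by (simp add: card_mono)
qed

lemma optimal_ge_mass:
  assumes P: "\<forall>i<\<mu>. \<forall>e\<in>E. 0 \<le> P i e \<and> P i e \<le> 1" and "0 < \<mu>"
    and "finite V" and "\<nu> \<le> \<mu>" and "k div \<nu> \<le> card V"
    and opt: "optimal corr \<mu> \<nu> V E P I k S"
  shows "real (k div \<nu>) * outcome_expectation corr \<mu> V E P (\<lambda>_. 1) \<le> Phi corr \<mu> \<nu> V E P I S"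
proof -
  obtain W where "W \<subseteq> V" and card_W: "card W = k div \<nu>"
    using obtain_subset_with_card_n[OF \<open>k div \<nu> \<le> card V\<close>] by blast
  define T where "T = (\<lambda>i::nat. if i < \<nu> then W else {})"
  have "(\<Sum>i<\<mu>. card (T i)) = (\<Sum>i<\<nu>. card (T i))"
    using \<open>\<nu> \<le> \<mu>\<close> by (intro sum.mono_neutral_right) (auto simp: T_def)
  also have "\<dots> = \<nu> * (k div \<nu>)"
    using card_W by (simp add: T_def)
  also have "\<dots> \<le> k"
    by simp
  finally have "feasible \<mu> V k T"
    unfolding feasible_def T_def using \<open>W \<subseteq> V\<close> by auto
  have "real (k div \<nu>) * outcome_expectation corr \<mu> V E P (\<lambda>_. 1)
      = outcome_expectation corr \<mu> V E P (\<lambda>_. real (card W))"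
    using outcome_expectation_cmult[of corr \<mu> V E P "real (card W)" "\<lambda>_. 1"] card_W by simp
  also have "\<dots> \<le> Phi corr \<mu> \<nu> V E P I T"
    unfolding Phi_eq_outcome_expectation
    using \<open>finite V\<close> \<open>W \<subseteq> V\<close> \<open>\<nu> \<le> \<mu>\<close>
    by (intro outcome_expectation_mono[OF P \<open>0 < \<mu>\<close>] balanced_count_ge_common_seeds)
      (auto simp: T_def)
  also have "\<dots> \<le> Phi corr \<mu> \<nu> V E P I S"
    using opt \<open>feasible \<mu> V k T\<close> unfolding optimal_def by blast
  finally show ?thesis .
qed

lemma one_le_mult_div_of_budget:
  fixes \<epsilon> :: real and k \<nu> :: nat
  assumes "\<epsilon> > 0" and "real k \<ge> 2 * real \<nu> / \<epsilon>" and "0 < \<nu>" and "\<nu> \<le> k"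
  shows "1 \<le> \<epsilon> * real (k div \<nu>)"
proof -
  define m where "m = k div \<nu>"
  have "1 \<le> m"
    unfolding m_def using assms(3,4) div_le_mono[of \<nu> k \<nu>] by simp
  have "k < (m + 1) * \<nu>"
    unfolding m_def using dividend_less_div_times[OF \<open>0 < \<nu>\<close>, of k] by simp
  also have "\<dots> \<le> 2 * m * \<nu>"
    using \<open>1 \<le> m\<close> by simp
  finally have "real k < real (2 * m * \<nu>)"
    by (simp only: of_nat_less_iff)
  then have "real k < 2 * real m * real \<nu>"
    by simp
  have "2 * real \<nu> \<le> \<epsilon> * real k"
    using assms(1,2) by (simp add: pos_divide_le_eq mult.commute)
  also have "\<dots> < \<epsilon> * (2 * real m * real \<nu>)"
    using \<open>real k < 2 * real m * real \<nu>\<close> \<open>\<epsilon> > 0\<close> by simp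
  finally have "2 * real \<nu> * 1 < 2 * real \<nu> * (\<epsilon> * real m)"
    by (simp add: algebra_simps)
  then show ?thesis
    unfolding m_def using \<open>0 < \<nu>\<close> by simp
qed

lemma mass_le_eps_mult_optimal:
  assumes inst: "BAL_instance corr \<mu> \<nu> V E P I k"
    and "\<epsilon> > 0" and "real k \<ge> 2 * real \<nu> / \<epsilon>"
    and opt: "optimal corr \<mu> \<nu> V E P I k S"
  shows "outcome_expectation corr \<mu> V E P (\<lambda>_. 1) \<le> \<epsilon> * Phi corr \<mu> \<nu> V E P I S"
proof -
  let ?Z = "outcome_expectation corr \<mu> V E P (\<lambda>_. 1)"
  have "2 \<le> \<nu>" and "\<nu> \<le> \<mu>" and "0 < \<mu>" and "finite V" and "\<nu> \<le> k" and "k \<le> \<nu> * card V"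
    and P: "\<forall>i<\<mu>. \<forall>e\<in>E. 0 \<le> P i e \<and> P i e \<le> 1"
    using inst unfolding BAL_instance_def by auto
  have "0 \<le> ?Z"
    by (rule outcome_expectation_nonneg[OF P \<open>0 < \<mu>\<close>]) simp
  moreover have "1 \<le> \<epsilon> * real (k div \<nu>)"
    using one_le_mult_div_of_budget assms(2,3) \<open>2 \<le> \<nu>\<close> \<open>\<nu> \<le> k\<close> by simp
  ultimately have "?Z \<le> \<epsilon> * real (k div \<nu>) * ?Z"
    using mult_right_mono[of 1 "\<epsilon> * real (k div \<nu>)" ?Z] by simp
  also have "\<dots> \<le> \<epsilon> * Phi corr \<mu> \<nu> V E P I S"
  proof -
    have "k div \<nu> \<le> card V"
      using \<open>k \<le> \<nu> * card V\<close> \<open>2 \<le> \<nu>\<close> div_le_mono[of k "\<nu> * card V" \<nu>] by simp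
    then show ?thesis
      using optimal_ge_mass[OF P \<open>0 < \<mu>\<close> \<open>finite V\<close> \<open>\<nu> \<le> \<mu>\<close> _ opt] \<open>\<epsilon> > 0\<close>
      by (simp add: mult.assoc)
  qed
  finally show ?thesis .
qed

lemma approximation_transfer:
  fixes \<alpha> \<epsilon> A B C Z :: real
  assumes approx: "\<alpha> * (C + Z) \<le> A + Z" and "B \<le> C"
    and "0 \<le> A" and "0 \<le> B" and "0 \<le> \<epsilon>" and "0 \<le> Z" and "Z \<le> \<epsilon> * B"
  shows "(\<alpha> - \<epsilon>) * B \<le> A"
proof (cases "\<alpha> \<ge> 0")
  case True
  have "\<alpha> * B + \<alpha> * Z \<le> \<alpha> * C + \<alpha> * Z"
    using True \<open>B \<le> C\<close> by (simp add: mult_left_mono)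
  also have "\<dots> \<le> A + Z"
    using approx by (simp add: distrib_left)
  finally have "\<alpha> * B + \<alpha> * Z \<le> A + Z" .
  moreover have "0 \<le> \<alpha> * Z"
    using True \<open>0 \<le> Z\<close> by simp
  moreover have "(\<alpha> - \<epsilon>) * B = \<alpha> * B - \<epsilon> * B"
    by (simp add: left_diff_distrib)
  ultimately show ?thesis
    using \<open>Z \<le> \<epsilon> * B\<close> by linarith
next
  case False
  then have "(\<alpha> - \<epsilon>) * B \<le> 0"
    using \<open>0 \<le> \<epsilon>\<close> \<open>0 \<le> B\<close> by (simp add: mult_nonpos_nonneg)
  then show ?thesis
    using \<open>0 \<le> A\<close> by linarith
qed

theorem mainTheorem14:
  fixes corr :: bool and \<mu> \<nu> k :: nat and V :: "'a set" and E :: "('a \<times> 'a) set"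
    and P :: "nat \<Rightarrow> 'a \<times> 'a \<Rightarrow> real" and I :: "nat \<Rightarrow> 'a set"
    and v :: 'a and \<epsilon> \<alpha> :: real and S' S'opt Sopt :: "nat \<Rightarrow> 'a set"
  assumes inst: "BAL_instance corr \<mu> \<nu> V E P I k"
    and eps: "\<epsilon> > 0"
    and kbig: "real k \<ge> 2 * real \<nu> / \<epsilon>"
    and vnew: "v \<notin> V"
    and S'feas: "feasible \<mu> (insert v V) k S'"
    and S'opt: "optimal corr \<mu> \<nu> (insert v V) E P (\<lambda>i. if i < \<nu> then I i \<union> {v} else I i) k S'opt"
    and approx: "Phi corr \<mu> \<nu> (insert v V) E P (\<lambda>i. if i < \<nu> then I i \<union> {v} else I i) S' \<ge> \<alpha> * Phi corr \<mu> \<nu> (insert v V) E P (\<lambda>i. if i < \<nu> then I i \<union> {v} else I i) S'opt"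
    and Sopt: "optimal corr \<mu> \<nu> V E P I k Sopt"
  shows "Phi corr \<mu> \<nu> V E P I (\<lambda>i. S' i - {v}) \<ge> (\<alpha> - \<epsilon>) * Phi corr \<mu> \<nu> V E P I Sopt"
proof -
  let ?I' = "\<lambda>i. if i < \<nu> then I i \<union> {v} else I i"
  let ?Z = "outcome_expectation corr \<mu> V E P (\<lambda>_. 1)"
  have "\<nu> \<le> \<mu>" and "0 < \<mu>" and "finite V" and "E \<subseteq> V \<times> V"
    and P: "\<forall>i<\<mu>. \<forall>e\<in>E. 0 \<le> P i e \<and> P i e \<le> 1" and I: "\<forall>i<\<mu>. I i \<subseteq> V"
    using inst unfolding BAL_instance_def by auto
  have "?I' i - {v} = I i" if "i < \<mu>" for i
    using I vnew that by auto
  then have shift: "Phi corr \<mu> \<nu> (insert v V) E P ?I' T = Phi corr \<mu> \<nu> V E P I (\<lambda>i. T i - {v}) + ?Z" for T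
    by (rule Phi_insert_isolated[OF \<open>finite V\<close> \<open>E \<subseteq> V \<times> V\<close> vnew \<open>\<nu> \<le> \<mu>\<close>]) auto
  have "feasible \<mu> V k Sopt"
    using Sopt unfolding optimal_def by blast
  then have "Phi corr \<mu> \<nu> (insert v V) E P ?I' Sopt \<le> Phi corr \<mu> \<nu> (insert v V) E P ?I' S'opt"
    using S'opt unfolding optimal_def feasible_def by blast
  moreover have "Phi corr \<mu> \<nu> V E P I (\<lambda>i. Sopt i - {v}) = Phi corr \<mu> \<nu> V E P I Sopt"
    using \<open>feasible \<mu> V k Sopt\<close> vnew unfolding feasible_def by (intro Phi_cong) blast
  ultimately have opt_le: "Phi corr \<mu> \<nu> V E P I Sopt \<le> Phi corr \<mu> \<nu> V E P I (\<lambda>i. S'opt i - {v})"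
    unfolding shift by simp
  have "0 \<le> ?Z"
    by (rule outcome_expectation_nonneg[OF P \<open>0 < \<mu>\<close>]) simp
  then show ?thesis
    using approximation_transfer[OF approx[unfolded shift] opt_le] eps
      mass_le_eps_mult_optimal[OF inst eps kbig Sopt] Phi_nonneg[OF P \<open>0 < \<mu>\<close>]
    by simp
qed

end
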